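(* Let $A$ be a finite nonempty set, $m\in\mathbb N_+$, and let $\rho\subseteq A^m$ be a generalized quasiorder. Then for every $n\in\mathbb N_+$ and every $n$-dimensional $m\times\cdots\times m$-array $(a_{i_1,\dots,i_n})_{i_1,\dots,i_n\in\{1,\dots,m\}}$ of elements of $A$ we have: if $\rho\models(a_{i_1,\dots,i_n})$, then $(a_{1,\dots,1},a_{2,\dots,2},\dots,a_{m,\dots,m})\in\rho$.
   Context: An $m$-ary relation $\rho\subseteq A^m$ is reflexive if $(a,\dots,a)\in\rho$ for all $a\in A$. For an $m\times m$-matrix $(a_{ij})$ over $A$, write $\rho\models(a_{ij})$ if every row and every column of the matrix belongs to $\rho$; $\rho$ is (generalized) transitive if $\rho\models(a_{ij})$ implies $(a_{11},\dots,a_{mm})\in\rho$ for every $m\times m$-matrix $(a_{ij})$. A generalized quasiorder is a reflexive and transitive relation. For an $n$-dimensional array $(a_{i_1,\dots,i_n})$ with indices in $\{1,\dots,m\}$, $\rho\models(a_{i_1,\dots,i_n})$ means: for every $j\in\{1,\dots,n\}$ and every fixed choice of the indices $i_1,\dots,i_{j-1},i_{j+1},\dots,i_n$, the $m$-tuple $(a_{i_1,\dots,i_{j-1},1,i_{j+1},\dots,i_n},\dots,a_{i_1,\dots,i_{j-1},m,i_{j+1},\dots,i_n})$ belongs to $\rho$. *)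

theory Defs
  imports Main
begin

(* m-ary relations on A are sets of lists of length m over A; indices are 0-based:
   the paper's index i in {1..m} corresponds to i-1 in {0..<m}. *)

definition is_rel :: "'a set \<Rightarrow> nat \<Rightarrow> 'a list set \<Rightarrow> bool" where
  "is_rel A m \<rho> \<longleftrightarrow> \<rho> \<subseteq> {xs. length xs = m \<and> set xs \<subseteq> A}"

definition reflexive_rel :: "'a set \<Rightarrow> nat \<Rightarrow> 'a list set \<Rightarrow> bool" where
  "reflexive_rel A m \<rho> \<longleftrightarrow> (\<forall>a\<in>A. replicate m a \<in> \<rho>)"

definition models_matrix :: "nat \<Rightarrow> 'a list set \<Rightarrow> (nat \<Rightarrow> nat \<Rightarrow> 'a) \<Rightarrow> bool" where
  "models_matrix m \<rho> M \<longleftrightarrow>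
     (\<forall>i<m. map (\<lambda>j. M i j) [0..<m] \<in> \<rho>) \<and> (\<forall>j<m. map (\<lambda>i. M i j) [0..<m] \<in> \<rho>)"

definition transitive_rel :: "'a set \<Rightarrow> nat \<Rightarrow> 'a list set \<Rightarrow> bool" where
  "transitive_rel A m \<rho> \<longleftrightarrow>
     (\<forall>M. (\<forall>i<m. \<forall>j<m. M i j \<in> A) \<longrightarrow> models_matrix m \<rho> M \<longrightarrow>
          map (\<lambda>i. M i i) [0..<m] \<in> \<rho>)"

definition gen_quasiorder :: "'a set \<Rightarrow> nat \<Rightarrow> 'a list set \<Rightarrow> bool" where
  "gen_quasiorder A m \<rho> \<longleftrightarrow> is_rel A m \<rho> \<and> reflexive_rel A m \<rho> \<and> transitive_rel A m \<rho>"

definition array_idx :: "nat \<Rightarrow> nat \<Rightarrow> nat list set" where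
  "array_idx n m = {is. length is = n \<and> (\<forall>k\<in>set is. k < m)}"

definition models_array :: "nat \<Rightarrow> nat \<Rightarrow> 'a list set \<Rightarrow> (nat list \<Rightarrow> 'a) \<Rightarrow> bool" where
  "models_array n m \<rho> a \<longleftrightarrow>
     (\<forall>j<n. \<forall>is\<in>array_idx n m. map (\<lambda>t. a (is[j := t])) [0..<m] \<in> \<rho>)"

end

theory Submission
  imports Defs
begin

text \<open>Induction on the dimension \<open>n\<close>. Split off the last coordinate and consider the
  \<open>m \<times> m\<close>-matrix \<open>M i j = a(i,\<dots>,i,j)\<close>. Its rows are lines of the array in the last direction,
  hence lie in \<open>\<rho>\<close>; its columns are the diagonals of the \<open>(n-1)\<close>-dimensional slices
  \<open>a(\<dots>,j)\<close>, which lie in \<open>\<rho>\<close> by induction. Transitivity then puts the diagonal of \<open>M\<close>,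
  which is the diagonal of the array, into \<open>\<rho>\<close>. The induction starts at \<open>n = 0\<close>, where the
  diagonal is a constant tuple and reflexivity applies.\<close>

lemma transitive_relD:
  assumes "transitive_rel A m \<rho>"
    and "\<And>i j. i < m \<Longrightarrow> j < m \<Longrightarrow> M i j \<in> A"
    and "\<And>i. i < m \<Longrightarrow> map (\<lambda>j. M i j) [0..<m] \<in> \<rho>"
    and "\<And>j. j < m \<Longrightarrow> map (\<lambda>i. M i j) [0..<m] \<in> \<rho>"
  shows "map (\<lambda>i. M i i) [0..<m] \<in> \<rho>"
  using assms unfolding transitive_rel_def models_matrix_def by blast

lemma snoc_in_array_idx_iff [simp]:
  "xs @ [j] \<in> array_idx (Suc n) m \<longleftrightarrow> xs \<in> array_idx n m \<and> j < m"
  by (auto simp: array_idx_def)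

lemma models_array_last_line:
  assumes "models_array (Suc n) m \<rho> a" and "xs \<in> array_idx n m" and "0 < m"
  shows "map (\<lambda>t. a (xs @ [t])) [0..<m] \<in> \<rho>"
proof -
  have "map (\<lambda>t. a ((xs @ [0])[n := t])) [0..<m] \<in> \<rho>"
    using assms unfolding models_array_def by simp
  moreover have "length xs = n"
    using assms(2) by (simp add: array_idx_def)
  ultimately show ?thesis
    by (simp add: list_update_append)
qed

lemma models_array_slice:
  assumes "models_array (Suc n) m \<rho> a" and "j < m"
  shows "models_array n m \<rho> (\<lambda>xs. a (xs @ [j]))"
  unfolding models_array_def
proof (intro allI impI ballI)
  fix k xs
  assume "k < n" and xs: "xs \<in> array_idx n m"
  then have "map (\<lambda>t. a ((xs @ [j])[k := t])) [0..<m] \<in> \<rho>"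
    using assms unfolding models_array_def by simp
  moreover have "length xs = n"
    using xs by (simp add: array_idx_def)
  ultimately show "map (\<lambda>t. a (xs[k := t] @ [j])) [0..<m] \<in> \<rho>"
    using \<open>k < n\<close> by (simp add: list_update_append)
qed

lemma models_array_diagonal:
  assumes refl: "reflexive_rel A m \<rho>" and trans: "transitive_rel A m \<rho>"
    and "\<forall>xs\<in>array_idx n m. a xs \<in> A" and "models_array n m \<rho> a"
  shows "map (\<lambda>i. a (replicate n i)) [0..<m] \<in> \<rho>"
  using assms(3,4)
proof (induction n arbitrary: a)
  case 0
  have "a [] \<in> A"
    using "0.prems"(1) by (simp add: array_idx_def)
  then show ?case
    using refl by (simp add: reflexive_rel_def map_replicate_const)
next
  case (Suc n)
  define M where "M = (\<lambda>i j. a (replicate n i @ [j]))"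
  have replicate_idx: "replicate n i \<in> array_idx n m" if "i < m" for i
    using that by (simp add: array_idx_def)
  have "map (\<lambda>i. M i i) [0..<m] \<in> \<rho>"
  proof (rule transitive_relD[OF trans, where M = M])
    fix i j
    assume "i < m" and "j < m"
    then have "replicate n i @ [j] \<in> array_idx (Suc n) m"
      using replicate_idx by simp
    then show "M i j \<in> A"
      using Suc.prems(1) by (simp add: M_def)
  next
    fix i
    assume "i < m"
    then have "map (\<lambda>j. a (replicate n i @ [j])) [0..<m] \<in> \<rho>"
      using models_array_last_line[OF Suc.prems(2) replicate_idx] by simp
    then show "map (\<lambda>j. M i j) [0..<m] \<in> \<rho>"
      by (simp add: M_def)
  next
    fix j
    assume "j < m"
    then have "\<forall>xs\<in>array_idx n m. a (xs @ [j]) \<in> A"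
      using Suc.prems(1) by simp
    then have "map (\<lambda>i. a (replicate n i @ [j])) [0..<m] \<in> \<rho>"
      using Suc.IH[of "\<lambda>xs. a (xs @ [j])"] models_array_slice[OF Suc.prems(2) \<open>j < m\<close>]
      by blast
    then show "map (\<lambda>i. M i j) [0..<m] \<in> \<rho>"
      by (simp add: M_def)
  qed
  then show ?case
    by (simp add: M_def replicate_append_same)
qed

theorem lemma3p6:
  fixes A :: "'a set" and m :: nat and \<rho> :: "'a list set"
  assumes "finite A" and "A \<noteq> {}" and "m \<ge> 1"
    and "gen_quasiorder A m \<rho>"
  shows "\<forall>n\<ge>1. \<forall>a :: nat list \<Rightarrow> 'a.
           (\<forall>is\<in>array_idx n m. a is \<in> A) \<longrightarrow> models_array n m \<rho> a \<longrightarrow>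
           map (\<lambda>i. a (replicate n i)) [0..<m] \<in> \<rho>"
  using assms(4) models_array_diagonal unfolding gen_quasiorder_def by blast

end
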